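(* Let $b>0$, and let $\psi$ be the function defined in the context, with $\psi^{(k)}$ its $k$-th derivative. For every $k\in\mathbb{N}\cup\{0\}$ there exists a unique solution on $(c,\infty)$ of the equation $(x-c)\psi^{(k+1)}(x)-\psi^{(k)}(x)=0$. In particular, there exists a unique $x_0>c$ solving $(x-c)\psi'(x)-\psi(x)=0$ and a unique $x_\infty>c$ solving $(x-c)\psi''(x)-\psi'(x)=0$.
   Context: Constants: $a\in\mathbb{R}$, $b>0$, $\sigma>0$, $\rho>0$, $c>0$. For $\beta<0$, let $D_\beta(x)=\frac{e^{-x^2/4}}{\Gamma(-\beta)}\int_0^\infty t^{-\beta-1}e^{-t^2/2-xt}\,dt$ be the parabolic cylinder function of order $\beta$, and define $$\psi(x)=e^{\frac{(bx-a)^2}{2\sigma^2 b}}D_{-\rho/b}\Big(-\frac{bx-a}{\sigma b}\sqrt{2b}\Big),\qquad x\in\mathbb{R},$$ which is the positive, strictly increasing fundamental solution of $\frac12\sigma^2u''+(a-bx)u'-\rho u=0$. *)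

theory Defs
  imports "HOL-Analysis.Analysis"
begin

text \<open>Parabolic cylinder function of order beta (intended for beta < 0), via its
  integral representation (Henstock-Kurzweil integral over (0,infinity)).\<close>
definition parabolic_D :: "real \<Rightarrow> real \<Rightarrow> real" where
  "parabolic_D \<beta> x =
     exp (- (x^2) / 4) / Gamma (- \<beta>) *
     integral {0<..} (\<lambda>t. t powr (- \<beta> - 1) * exp (- (t^2) / 2 - x * t))"

text \<open>The fundamental solution psi of (1/2) sigma^2 u'' + (a - b x) u' - rho u = 0.\<close>
definition psi_fun :: "real \<Rightarrow> real \<Rightarrow> real \<Rightarrow> real \<Rightarrow> real \<Rightarrow> real" where
  "psi_fun a b \<sigma> \<rho> x =
     exp ((b * x - a)^2 / (2 * \<sigma>^2 * b)) *
     parabolic_D (- \<rho> / b) (- ((b * x - a) / (\<sigma> * b)) * sqrt (2 * b))"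

end

theory Submission
  imports Defs
begin

text \<open>Write \<open>J p s = \<integral>\<^sub>0\<^sup>\<infinity> t powr p * exp (s t - t\<^sup>2/2) dt\<close>. Then
  \<open>\<psi> x = J q (\<kappa> (x - a/b)) / \<Gamma>(\<rho>/b)\<close> with \<open>q = \<rho>/b - 1 > -1\<close> and \<open>\<kappa> = \<surd>(2b)/\<sigma> > 0\<close>.
  Differentiating under the integral sign gives \<open>\<partial>\<^sub>s J p s = J (p + 1) s\<close>, so every derivative
  \<open>f = \<psi>\<^sup>(\<^sup>k\<^sup>)\<close> is a positive multiple of \<open>J (q + k) (\<kappa> (x - a/b))\<close>: it is positive, and so
  is its second derivative, which moreover increases. Then \<open>g x = (x - c) f' x - f x\<close> has
  \<open>g c = - f c < 0\<close> and \<open>g' x = (x - c) f'' x \<ge> (x - c) f'' c\<close>, so on \<open>(c, \<infinity>)\<close> it increases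
  strictly and at least quadratically, and therefore has exactly one zero there.\<close>

lemma unique_tangent_through_point:
  fixes f f' f'' :: "real \<Rightarrow> real"
  assumes f_deriv: "\<And>x. x \<ge> c \<Longrightarrow> (f has_real_derivative f' x) (at x)"
    and f'_deriv: "\<And>x. x \<ge> c \<Longrightarrow> (f' has_real_derivative f'' x) (at x)"
    and fc: "f c > 0" and m: "m > 0" and f''_ge: "\<And>x. x \<ge> c \<Longrightarrow> m \<le> f'' x"
  shows "\<exists>!x. x > c \<and> (x - c) * f' x - f x = 0"
proof -
  define g where "g x = (x - c) * f' x - f x" for x
  have g': "(g has_real_derivative (x - c) * f'' x) (at x)" if "x \<ge> c" for x
    unfolding g_def using f_deriv[OF that] f'_deriv[OF that]
    by (auto intro!: derivative_eq_intros simp: algebra_simps)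
  have g_cont: "continuous_on {c..} g"
    using g' by (meson DERIV_isCont atLeast_iff continuous_at_imp_continuous_on)
  have g_strict_mono: "g x < g y" if "c \<le> x" "x < y" for x y
  proof (rule DERIV_pos_imp_increasing_open[OF \<open>x < y\<close>])
    fix z assume "x < z" "z < y"
    then show "\<exists>D. (g has_real_derivative D) (at z) \<and> D > 0"
      using that g' f''_ge[of z] m by (intro exI[of _ "(z - c) * f'' z"]) auto
  qed (use g_cont that in \<open>auto intro: continuous_on_subset\<close>)
  have g_ge: "g c + m * (x - c)^2 / 2 \<le> g x" if "c \<le> x" for x
  proof -
    define h where "h x = g x - m * (x - c)^2 / 2" for x
    have "h c \<le> h x"
    proof (rule DERIV_nonneg_imp_nondecreasing[OF that])
      fix z assume z: "c \<le> z" "z \<le> x"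
      have "(h has_real_derivative (z - c) * f'' z - m * (z - c)) (at z)"
        unfolding h_def using g'[OF z(1)]
        by (auto intro!: derivative_eq_intros simp: power2_eq_square field_simps)
      moreover have "0 \<le> (z - c) * (f'' z - m)"
        using z f''_ge[of z] by simp
      ultimately show "\<exists>D. (h has_real_derivative D) (at z) \<and> 0 \<le> D"
        by (auto simp: algebra_simps)
    qed
    then show ?thesis by (simp add: h_def)
  qed
  define X where "X = c + 1 + 2 * f c / m"
  have X: "1 \<le> X - c" using fc m by (simp add: X_def)
  have "f c < m * (X - c) / 2"
    using m fc by (simp add: X_def field_simps)
  also have "\<dots> \<le> m * (X - c)^2 / 2"
    using X m by (simp add: power2_eq_square)
  finally have "0 < g X"
    using g_ge[of X] X by (simp add: g_def)
  moreover have "g c < 0" using fc by (simp add: g_def)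
  ultimately obtain x where x: "c \<le> x" "x \<le> X" "g x = 0"
    using IVT'[of g c 0 X] X continuous_on_subset[OF g_cont] by fastforce
  with \<open>g c < 0\<close> have "x > c" by (cases "x = c") auto
  with x show ?thesis
    unfolding g_def[symmetric]
    by (metis g_strict_mono less_irrefl linorder_neqE_linordered_idom order_less_imp_le)
qed

lemma abs_exp_minus_one_minus_le: "\<bar>exp u - 1 - u\<bar> \<le> u^2 * exp \<bar>u\<bar>" for u :: real
proof -
  obtain t where t: "\<bar>t\<bar> \<le> \<bar>u\<bar>" "exp u = 1 + u + exp t / 2 * u^2"
    using Maclaurin_exp_le[of u 2] by (auto simp: numeral_2_eq_2)
  then have "\<bar>exp u - 1 - u\<bar> = exp t / 2 * u^2" by simp
  also have "\<dots> \<le> exp \<bar>u\<bar> * u^2"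
  proof (intro mult_right_mono)
    have "exp t \<le> exp \<bar>u\<bar>" using t(1) by (simp add: abs_le_iff)
    then show "exp t / 2 \<le> exp \<bar>u\<bar>" using exp_gt_zero[of t] by linarith
  qed simp
  finally show ?thesis by (simp add: mult.commute)
qed

definition gauss_moment :: "real \<Rightarrow> real \<Rightarrow> real" where
  "gauss_moment p s = integral {0<..} (\<lambda>t. t powr p * exp (- (t^2) / 2 + s * t))"

lemma gauss_moment_integrable:
  fixes p s :: real
  assumes "p > -1"
  shows "(\<lambda>t. t powr p * exp (- (t^2) / 2 + s * t)) integrable_on {0<..}"
proof -
  define K where "K = exp ((s + 1)^2 / 2)"
  have "((\<lambda>t. t powr p / exp t) has_integral Gamma (p + 1)) {0..}"
    using Gamma_integral_real[of "p + 1"] assms by simp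
  then have "(\<lambda>t. t powr p / exp t) integrable_on {0<..}"
    by (intro integrable_spike_set[OF has_integral_integrable])
       (auto intro: negligible_subset[of "{0}"])
  then have majorant: "(\<lambda>t. K * (t powr p / exp t)) integrable_on {0<..}"
    by (rule integrable_on_mult_right)
  show ?thesis
  proof (rule measurable_bounded_by_integrable_imp_integrable[OF _ majorant])
    show "(\<lambda>t. t powr p * exp (- (t^2) / 2 + s * t)) \<in> borel_measurable (lebesgue_on {0<..})"
      by (rule continuous_imp_measurable_on_sets_lebesgue) (auto intro!: continuous_intros)
    fix t :: real assume "t \<in> {0<..}"
    have "- (t^2) / 2 + s * t = (s + 1)^2 / 2 - t - (t - (s + 1))^2 / 2"
      by (simp add: power2_eq_square field_simps)
    then have "exp (- (t^2) / 2 + s * t) \<le> K * exp (- t)"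
      by (simp add: K_def flip: exp_add exp_diff)
    then have "t powr p * exp (- (t^2) / 2 + s * t) \<le> t powr p * (K * exp (- t))"
      by (intro mult_left_mono) auto
    then show "norm (t powr p * exp (- (t^2) / 2 + s * t)) \<le> K * (t powr p / exp t)"
      by (simp add: exp_minus field_simps)
  qed simp
qed

lemma gauss_moment_taylor_bound:
  fixes p s h :: real
  assumes p: "p > -1" and h: "\<bar>h\<bar> \<le> 1"
  shows "\<bar>gauss_moment p (s + h) - gauss_moment p s - h * gauss_moment (p + 1) s\<bar>
           \<le> h^2 * gauss_moment (p + 2) (s + 1)"
proof -
  define G where "G q y = (\<lambda>t. t powr q * exp (- (t^2) / 2 + y * t))" for q y :: real
  have G_int: "G q y integrable_on {0<..}" if "q > -1" for q y
    unfolding G_def using that by (rule gauss_moment_integrable)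
  have moment: "gauss_moment q y = integral {0<..} (G q y)" for q y
    unfolding gauss_moment_def G_def ..
  have pointwise: "norm (G p (s + h) t - G p s t - h * G (p + 1) s t) \<le> h^2 * G (p + 2) (s + 1) t"
    if "t \<in> {0<..}" for t
  proof -
    have t: "t > 0" using that by simp
    have "G p (s + h) t - G p s t - h * G (p + 1) s t = G p s t * (exp (h * t) - 1 - h * t)"
      using t by (simp add: G_def powr_add algebra_simps flip: exp_add)
    moreover have "\<bar>exp (h * t) - 1 - h * t\<bar> \<le> (h * t)^2 * exp t"
    proof -
      have "\<bar>h * t\<bar> \<le> t" using h t by (simp add: abs_mult mult_left_le_one_le)
      then have "(h * t)^2 * exp \<bar>h * t\<bar> \<le> (h * t)^2 * exp t" by (simp add: mult_left_mono)
      then show ?thesis using abs_exp_minus_one_minus_le[of "h * t"] by linarith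
    qed
    moreover have "G p s t * ((h * t)^2 * exp t) = h^2 * G (p + 2) (s + 1) t"
      using t by (simp add: G_def powr_add power_mult_distrib algebra_simps flip: exp_add)
    moreover have "G p s t \<ge> 0" by (simp add: G_def)
    ultimately show ?thesis
      by (metis abs_mult abs_of_nonneg mult_left_mono real_norm_def)
  qed
  have "gauss_moment p (s + h) - gauss_moment p s - h * gauss_moment (p + 1) s
          = integral {0<..} (\<lambda>t. G p (s + h) t - G p s t - h * G (p + 1) s t)"
    using p by (simp add: moment G_int integral_diff integral_mult_right integrable_diff
                          integrable_on_mult_right)
  also have "norm \<dots> \<le> integral {0<..} (\<lambda>t. h^2 * G (p + 2) (s + 1) t)"
    using p pointwise
    by (intro integral_norm_bound_integral)
       (auto intro!: G_int integrable_diff integrable_on_mult_right)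
  also have "\<dots> = h^2 * gauss_moment (p + 2) (s + 1)"
    by (simp add: moment)
  finally show ?thesis by simp
qed

lemma gauss_moment_has_derivative:
  fixes p s :: real
  assumes p: "p > -1"
  shows "(gauss_moment p has_real_derivative gauss_moment (p + 1) s) (at s)"
proof -
  define B where "B = gauss_moment (p + 2) (s + 1)"
  have quotient_bound:
    "\<bar>(gauss_moment p y - gauss_moment p s) / (y - s) - gauss_moment (p + 1) s\<bar> \<le> \<bar>y - s\<bar> * B"
    if "y \<noteq> s" "\<bar>y - s\<bar> \<le> 1" for y
  proof -
    let ?h = "y - s"
    have "(gauss_moment p y - gauss_moment p s) / ?h - gauss_moment (p + 1) s
            = (gauss_moment p (s + ?h) - gauss_moment p s - ?h * gauss_moment (p + 1) s) / ?h"
      using that by (simp add: diff_divide_distrib)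
    also have "\<bar>\<dots>\<bar> \<le> \<bar>?h\<bar> * B"
      using gauss_moment_taylor_bound[OF p that(2), where s = s] that
      by (simp add: B_def abs_divide pos_divide_le_eq power2_eq_square mult.commute mult.left_commute)
    finally show ?thesis .
  qed
  have "((\<lambda>y. (gauss_moment p y - gauss_moment p s) / (y - s) - gauss_moment (p + 1) s) \<longlongrightarrow> 0) (at s)"
  proof (rule Lim_null_comparison)
    show "\<forall>\<^sub>F y in at s.
            norm ((gauss_moment p y - gauss_moment p s) / (y - s) - gauss_moment (p + 1) s) \<le> \<bar>y - s\<bar> * B"
      unfolding eventually_at by (intro exI[of _ 1]) (auto simp: dist_real_def intro!: quotient_bound)
    show "((\<lambda>y. \<bar>y - s\<bar> * B) \<longlongrightarrow> 0) (at s)"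
      by (auto intro!: tendsto_eq_intros)
  qed
  then show ?thesis
    unfolding has_field_derivative_iff by (simp add: LIM_zero_iff)
qed

lemma gauss_moment_pos:
  fixes p s :: real
  assumes "p > -1"
  shows "gauss_moment p s > 0"
proof -
  define G where "G = (\<lambda>t::real. t powr p * exp (- (t^2) / 2 + s * t))"
  have G_cont: "continuous_on {1..2} G" unfolding G_def by (auto intro!: continuous_intros)
  then obtain t0 where t0: "t0 \<in> {1..2}" "\<And>t. t \<in> {1..2} \<Longrightarrow> G t0 \<le> G t"
    using continuous_attains_inf[OF compact_Icc _ G_cont] by auto
  have "0 < G t0" using t0 by (simp add: G_def)
  also have "\<dots> = integral {1..2::real} (\<lambda>_. G t0)" by simp
  also have "\<dots> \<le> integral {1..2} G"
    using t0 G_cont by (intro integral_le integrable_continuous_interval) auto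
  also have "\<dots> \<le> integral {0<..} G"
    using assms G_cont unfolding G_def
    by (intro integral_subset_le integrable_continuous_interval gauss_moment_integrable) auto
  finally show ?thesis by (simp add: gauss_moment_def G_def)
qed

lemma gauss_moment_mono:
  fixes p s s' :: real
  assumes "p > -1" and "s \<le> s'"
  shows "gauss_moment p s \<le> gauss_moment p s'"
proof (rule DERIV_nonneg_imp_nondecreasing[OF assms(2)])
  fix x
  show "\<exists>D. (gauss_moment p has_real_derivative D) (at x) \<and> 0 \<le> D"
    using gauss_moment_has_derivative[OF assms(1)] gauss_moment_pos[of "p + 1" x] assms(1)
    by (intro exI[of _ "gauss_moment (p + 1) x"]) auto
qed

lemma gauss_moment_affine_has_derivative:
  fixes p C \<kappa> m x :: real
  assumes "p > -1"
  shows "((\<lambda>x. C * gauss_moment p (\<kappa> * (x - m))) has_real_derivative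
            C * \<kappa> * gauss_moment (p + 1) (\<kappa> * (x - m))) (at x)"
proof -
  have "((\<lambda>x. gauss_moment p (\<kappa> * (x - m))) has_real_derivative
          gauss_moment (p + 1) (\<kappa> * (x - m)) * \<kappa>) (at x)"
    by (rule DERIV_chain2[OF gauss_moment_has_derivative[OF assms]])
       (auto intro!: derivative_eq_intros)
  from DERIV_cmult[OF this, of C] show ?thesis
    by (simp add: ac_simps)
qed

lemma deriv_funpow_gauss_moment_affine:
  fixes p C \<kappa> m :: real
  assumes "p > -1"
  shows "(deriv ^^ n) (\<lambda>x. C * gauss_moment p (\<kappa> * (x - m)))
           = (\<lambda>x. C * \<kappa>^n * gauss_moment (p + n) (\<kappa> * (x - m)))"
proof (induction n)
  case 0
  show ?case by simp
next
  case (Suc n)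
  have "deriv (\<lambda>x. C * \<kappa>^n * gauss_moment (p + n) (\<kappa> * (x - m))) x
          = C * \<kappa>^Suc n * gauss_moment (p + Suc n) (\<kappa> * (x - m))" for x
    using gauss_moment_affine_has_derivative[of "p + n" "C * \<kappa>^n" \<kappa> m x] assms
    by (auto dest!: DERIV_imp_deriv simp: algebra_simps)
  with Suc.IH show ?case by auto
qed

lemma psi_fun_eq_gauss_moment:
  fixes a b \<sigma> \<rho> :: real
  assumes b: "b > 0" and \<sigma>: "\<sigma> > 0"
  shows "psi_fun a b \<sigma> \<rho> =
           (\<lambda>x. 1 / Gamma (\<rho> / b) * gauss_moment (\<rho> / b - 1) (sqrt (2 * b) / \<sigma> * (x - a / b)))"
proof
  fix x
  define z where "z = - ((b * x - a) / (\<sigma> * b)) * sqrt (2 * b)"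
  have z_eq: "- z = sqrt (2 * b) / \<sigma> * (x - a / b)"
    using b \<sigma> by (simp add: z_def field_simps)
  have "sqrt (2 * b) ^ 2 = 2 * b" using b by simp
  then have z_sq: "z^2 = ((b * x - a) / (\<sigma> * b))^2 * (2 * b)"
    unfolding z_def power_mult_distrib power2_minus by simp
  have "(b * x - a)^2 / (2 * \<sigma>^2 * b) + (- (z^2) / 4) = 0"
    unfolding z_sq using b \<sigma> by (simp add: field_simps power2_eq_square)
  then have "exp ((b * x - a)^2 / (2 * \<sigma>^2 * b)) * exp (- (z^2) / 4) = 1"
    by (simp flip: exp_add)
  moreover have "(\<lambda>t. t powr (- (- \<rho> / b) - 1) * exp (- (t^2) / 2 - z * t))
                   = (\<lambda>t. t powr (\<rho> / b - 1) * exp (- (t^2) / 2 + (- z) * t))"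
    by simp
  ultimately show "psi_fun a b \<sigma> \<rho> x =
      1 / Gamma (\<rho> / b) * gauss_moment (\<rho> / b - 1) (sqrt (2 * b) / \<sigma> * (x - a / b))"
    unfolding psi_fun_def parabolic_D_def gauss_moment_def z_def[symmetric] z_eq[symmetric]
    by (simp add: field_simps)
qed

theorem lemma4p4:
  fixes a b \<sigma> \<rho> c :: real
  assumes "b > 0" and "\<sigma> > 0" and "\<rho> > 0" and "c > 0"
  defines "\<psi> \<equiv> psi_fun a b \<sigma> \<rho>"
  shows "(\<forall>k::nat. \<exists>!x. x > c \<and>
            (x - c) * (deriv ^^ (k + 1)) \<psi> x - (deriv ^^ k) \<psi> x = 0)
       \<and> (\<exists>!x0. x0 > c \<and> (x0 - c) * deriv \<psi> x0 - \<psi> x0 = 0)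
       \<and> (\<exists>!xinf. xinf > c \<and> (xinf - c) * deriv (deriv \<psi>) xinf - deriv \<psi> xinf = 0)"
proof -
  define q \<kappa> C where "q = \<rho> / b - 1" and "\<kappa> = sqrt (2 * b) / \<sigma>" and "C = 1 / Gamma (\<rho> / b)"
  have q: "q > -1" and \<kappa>: "\<kappa> > 0" and C: "C > 0"
    using assms by (simp_all add: q_def \<kappa>_def C_def)
  define F where "F n x = C * \<kappa>^n * gauss_moment (q + n) (\<kappa> * (x - a / b))" for n x
  have "\<psi> = (\<lambda>x. C * gauss_moment q (\<kappa> * (x - a / b)))"
    unfolding \<psi>_def psi_fun_eq_gauss_moment[OF assms(1,2)] q_def \<kappa>_def C_def ..
  then have derivs: "(deriv ^^ n) \<psi> = F n" for n
    unfolding F_def[abs_def] by (simp add: deriv_funpow_gauss_moment_affine[OF q])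
  have F_deriv: "(F n has_real_derivative F (Suc n) x) (at x)" for n x
    using gauss_moment_affine_has_derivative[of "q + n" "C * \<kappa>^n" \<kappa> "a / b" x] q
    by (simp add: F_def[abs_def] algebra_simps)
  have F_pos: "F n x > 0" for n x
    using q \<kappa> C by (simp add: F_def gauss_moment_pos)
  have F_mono: "F n c \<le> F n x" if "c \<le> x" for n x
    using q \<kappa> C that by (simp add: F_def gauss_moment_mono mult_left_mono)
  have "\<exists>!x. x > c \<and> (x - c) * F (k + 1) x - F k x = 0" for k
    using F_deriv F_pos F_mono by (intro unique_tangent_through_point[of c, where m = "F (k + 2) c"]) auto
  then have "\<forall>k. \<exists>!x. x > c \<and> (x - c) * (deriv ^^ (k + 1)) \<psi> x - (deriv ^^ k) \<psi> x = 0"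
    unfolding derivs by blast
  from this spec[OF this, of 0] spec[OF this, of 1] show ?thesis
    by (simp add: numeral_2_eq_2)
qed

end
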